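(* Let $N$ be a positive integer, $h:=1/N$, $t_j:=jh$ for $j\in\mathbb Z$, and $e_n(t):=\exp(2\pi i n t)$. Let $\mathbb T_h:=\mathrm{span}\{e_n : n\in\mathbb Z,\ -N/2\le n<N/2\}$. Then for every $\phi\in\mathbb T_h$ and every $t\in\mathbb R$ with $t/h\notin\mathbb Z$, \[ h\sum_{j=1}^N \cot(\pi(t-t_j))\,\phi(t_j)=(H\phi)(t)+\cot(\pi t/h)\,\phi(t), \] where $(H\phi)(t):=\mathrm{p.v.}\int_0^1\cot(\pi(t-\tau))\,\phi(\tau)\,\mathrm d\tau$ is the periodic Hilbert transform.
   Context: Trigonometric polynomials are complex-valued 1-periodic functions; p.v. denotes the Cauchy principal value integral. *)

theory Defs
  imports "HOL-Analysis.Analysis"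
begin

definition fourier_e :: "int \<Rightarrow> real \<Rightarrow> complex" where
  "fourier_e n t = exp (2 * of_real pi * \<i> * of_int n * of_real t)"

definition trig_index :: "nat \<Rightarrow> int set" where
  "trig_index N = {n. - (real N / 2) \<le> real_of_int n \<and> real_of_int n < real N / 2}"

definition trig_space :: "nat \<Rightarrow> (real \<Rightarrow> complex) set" where
  "trig_space N = {\<phi>. \<exists>c :: int \<Rightarrow> complex.
      \<phi> = (\<lambda>t. \<Sum>n\<in>trig_index N. c n * fourier_e n t)}"

definition hilbert_trunc :: "(real \<Rightarrow> complex) \<Rightarrow> real \<Rightarrow> real \<Rightarrow> complex" where
  "hilbert_trunc \<phi> t \<epsilon> =
     integral {\<tau> \<in> {0..1}. \<forall>k::int. \<epsilon> \<le> \<bar>t - \<tau> - real_of_int k\<bar>}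
       (\<lambda>\<tau>. complex_of_real (cot (pi * (t - \<tau>))) * \<phi> \<tau>)"

definition periodic_hilbert :: "(real \<Rightarrow> complex) \<Rightarrow> real \<Rightarrow> complex" where
  "periodic_hilbert \<phi> t = Lim (at_right 0) (hilbert_trunc \<phi> t)"

end

theory Submission
  imports Defs
begin

text \<open>For s \<notin> \<int>, cot(\<pi>s) e_{-n}(s) = cot(\<pi>s) + q_n(s) with q_n a trigonometric polynomial of degree
  |n|. As e_n(\<tau>) = e_n(t) e_{-n}(t - \<tau>), this gives cot(\<pi>(t - \<tau>)) \<phi>(\<tau>) = \<phi>(t) cot(\<pi>(t - \<tau>)) + r(\<tau>)
  with r a trigonometric polynomial of degree < N. The N-point rectangle rule integrates such r
  exactly, so both sides of the identity equal \<phi>(t) times a cot term plus the integral of r over a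
  period: the principal value of cot(\<pi>(t - \<tau>)) vanishes, and h \<Sum>_j cot(\<pi>(t - t_j)) = cot(\<pi>t/h).\<close>

lemma fourier_e_freq_add: "fourier_e (m + n) s = fourier_e m s * fourier_e n s"
  unfolding fourier_e_def by (simp add: exp_add[symmetric] algebra_simps)

lemma fourier_e_0 [simp]: "fourier_e 0 s = 1"
  unfolding fourier_e_def by simp

lemma fourier_e_at_0 [simp]: "fourier_e n 0 = 1"
  unfolding fourier_e_def by simp

lemma fourier_e_1_power: "fourier_e 1 s ^ k = fourier_e (int k) s"
  unfolding fourier_e_def exp_of_nat_mult[symmetric] by (simp add: mult_ac)

lemma fourier_e_diff: "fourier_e n s = fourier_e n t * fourier_e (- n) (t - s)"
  unfolding fourier_e_def by (simp add: exp_add[symmetric] algebra_simps)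

lemma fourier_e_arg_add_of_int: "fourier_e n (s + of_int m) = fourier_e n s"
proof -
  have "fourier_e n (s + of_int m) = fourier_e n s * exp ((2 * of_int (n * m) * pi) * \<i>)"
    unfolding fourier_e_def by (simp add: exp_add[symmetric] algebra_simps)
  also have "exp ((2 * of_int (n * m) * pi) * \<i>) = 1"
    by (rule exp_integer_2pi) simp
  finally show ?thesis by simp
qed

lemma continuous_on_fourier_e [continuous_intros]:
  "continuous_on S g \<Longrightarrow> continuous_on S (\<lambda>x. fourier_e n (g x))"
  unfolding fourier_e_def by (intro continuous_intros)

lemma fourier_e_arg_add: "fourier_e n (s + u) = fourier_e n s * fourier_e n u"
  unfolding fourier_e_def by (simp add: exp_add[symmetric] algebra_simps)

lemma fourier_e_arg_mult_nat: "fourier_e n (real j * s) = fourier_e n s ^ j"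
  unfolding fourier_e_def exp_of_nat_mult[symmetric] by (simp add: mult_ac)

lemma fourier_e_freq_mult: "fourier_e (m * n) s = fourier_e n (of_int m * s)"
  unfolding fourier_e_def by (simp add: mult_ac)

lemma fourier_e_eq_1_iff: "fourier_e n s = 1 \<longleftrightarrow> of_int n * s \<in> \<int>"
proof -
  have "fourier_e n s = exp (2 * of_real (of_int n * s) * of_real pi * \<i>)"
    unfolding fourier_e_def by (simp add: mult_ac)
  then show ?thesis
    by (simp only: exp_eq_1 Ints_def) (auto simp: mult.commute)
qed

lemma sin_pi_nonzero_iff: "sin (pi * s) \<noteq> 0 \<longleftrightarrow> s \<notin> \<int>"
  using sin_times_pi_eq_0[of s] by (simp add: mult.commute)

lemma cot_mult_fourier_e_1:
  assumes "s \<notin> \<int>"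
  shows "complex_of_real (cot (pi * s)) * (fourier_e 1 s - 1) = \<i> * (fourier_e 1 s + 1)"
proof -
  have sin: "sin (pi * s) \<noteq> 0" using assms by (simp add: sin_pi_nonzero_iff)
  have e: "fourier_e 1 s = Complex (cos (2 * (pi * s))) (sin (2 * (pi * s)))"
    unfolding fourier_e_def by (simp add: exp_eq_polar cis.ctr mult_ac del: Complex_eq)
  show ?thesis unfolding e cot_def cos_double sin_double
    using sin by (simp add: complex_eq_iff field_simps power2_eq_square)
       (metis distrib_left mult.right_neutral sin_cos_squared_add3)
qed

lemma fourier_e_1_neq_1: "s \<notin> \<int> \<Longrightarrow> fourier_e 1 s \<noteq> 1"
  using cot_mult_fourier_e_1 by fastforce

lemma sum_fourier_e_nodes:
  assumes N: "N > 0" and k: "\<bar>k\<bar> < int N"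
  shows "(\<Sum>j=1..N. fourier_e k (t - real j / real N)) = (if k = 0 then of_nat N else 0)"
proof (cases "k = 0")
  case False
  define r where "r = fourier_e k (- 1 / real N)"
  have nodes: "fourier_e k (t - real j / real N) = fourier_e k t * r ^ j" for j
  proof -
    have "t - real j / real N = t + real j * (- 1 / real N)" by simp
    then show ?thesis unfolding r_def by (simp only: fourier_e_arg_add fourier_e_arg_mult_nat)
  qed
  have "r ^ N = fourier_e k (of_int (- 1))"
    unfolding r_def fourier_e_arg_mult_nat[symmetric] using N by simp
  then have rN: "r ^ N = 1"
    using fourier_e_arg_add_of_int[of k 0 "-1"] by simp
  have "r \<noteq> 1"
  proof
    assume "r = 1"
    then have "of_int k * (- 1 / real N) \<in> \<int>"
      unfolding r_def by (simp only: fourier_e_eq_1_iff)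
    then obtain m :: int where m: "of_int k * (- 1 / real N) = of_int m"
      by (elim Ints_cases)
    have "real_of_int k = of_int (- m * int N)"
      using m N by (simp add: field_simps)
    then have "k = - m * int N" by (simp only: of_int_eq_iff)
    with False have "\<bar>m\<bar> \<ge> 1" "\<bar>k\<bar> = \<bar>m\<bar> * int N" by (auto simp: abs_mult)
    then show False
      using k mult_right_mono[of 1 "\<bar>m\<bar>" "int N"] by simp
  qed
  have "(\<Sum>j=1..N. r ^ j) = (\<Sum>j<N. r ^ Suc j)"
    by (rule sum.reindex_bij_witness[of _ Suc "\<lambda>j. j - 1"]) auto
  also have "\<dots> = r * (\<Sum>j<N. r ^ j)" by (simp add: sum_distrib_left)
  also have "\<dots> = 0" using \<open>r \<noteq> 1\<close> rN by (simp add: geometric_sum)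
  finally show ?thesis using False by (simp add: nodes flip: sum_distrib_left)
qed simp

lemma has_integral_fourier_e_diff:
  "((\<lambda>\<tau>. fourier_e k (t - \<tau>)) has_integral (if k = 0 then 1 else 0)) {0..1}"
proof (cases "k = 0")
  case False
  define c where "c = 2 * of_real pi * \<i> * (of_int k :: complex)"
  have "c \<noteq> 0" using False by (simp add: c_def)
  define g where "g w = exp (c * (of_real t - w)) / (- c)" for w
  have fe: "fourier_e k (t - \<tau>) = exp (c * (of_real t - of_real \<tau>))" for \<tau>
    unfolding fourier_e_def c_def by (simp add: algebra_simps)
  have "(g has_field_derivative exp (c * (of_real t - w))) (at w)" for w
    unfolding g_def using \<open>c \<noteq> 0\<close> by (auto intro!: derivative_eq_intros simp: field_simps)
  then have "((\<lambda>\<tau>. g (of_real \<tau>)) has_vector_derivative fourier_e k (t - \<tau>)) (at \<tau> within {0..1})"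
    for \<tau>
    unfolding fe by (rule has_vector_derivative_real_field)
  from fundamental_theorem_of_calculus[OF _ this]
  have "((\<lambda>\<tau>. fourier_e k (t - \<tau>)) has_integral (g 1 - g 0)) {0..1}" by simp
  moreover have "g 1 = g 0"
  proof -
    have "g (of_real \<tau>) = fourier_e k (t - \<tau>) / (- c)" for \<tau>
      unfolding g_def fe ..
    then show ?thesis
      using fourier_e_arg_add_of_int[of k "t - 1" 1]
      by (metis diff_zero diff_add_cancel of_real_0 of_real_1 of_int_1)
  qed
  ultimately show ?thesis using False by simp
qed (use has_integral_const_real[of "1::complex" 0 1] in simp)

lemma fourier_e_neg_nat_telescope:
  "fourier_e (- int m) s - 1 = - (fourier_e 1 s - 1) * (\<Sum>k<m. fourier_e (- int k - 1) s)"
proof (induction m)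
  case (Suc m)
  have "fourier_e (- int m) s = fourier_e 1 s * fourier_e (- int m - 1) s"
    using fourier_e_freq_add[of 1 "- int m - 1" s] by simp
  moreover have "fourier_e (- int (Suc m)) s = fourier_e (- int m - 1) s"
    by (rule arg_cong[where f = "\<lambda>n. fourier_e n s"]) simp
  ultimately show ?case using Suc by (simp only: sum.lessThan_Suc) algebra
qed simp

lemma fourier_e_nat_telescope:
  "fourier_e (int m) s - 1 = (fourier_e 1 s - 1) * (\<Sum>k<m. fourier_e (int k) s)"
proof (induction m)
  case (Suc m)
  have "fourier_e (int (Suc m)) s = fourier_e 1 s * fourier_e (int m) s"
    using fourier_e_freq_add[of 1 "int m" s] by (simp add: add.commute)
  then show ?case using Suc by (simp only: sum.lessThan_Suc) algebra
qed simp

text \<open>Multiplying the telescoping sums for z^{-n} - 1 (z = e_1(s)) by cot(\<pi>s) = i (z + 1)/(z - 1)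
  cancels the pole; what remains is a trigonometric polynomial with frequencies in [-|n|, |n|].\<close>
definition cot_fourier_remainder :: "int \<Rightarrow> real \<Rightarrow> complex" where
  "cot_fourier_remainder n s =
    (if 0 \<le> n then - \<i> * (\<Sum>k<nat n. fourier_e (- int k) s + fourier_e (- int k - 1) s)
     else \<i> * (\<Sum>k<nat (- n). fourier_e (int k) s + fourier_e (int k + 1) s))"

lemma cot_mult_fourier_e:
  assumes "s \<notin> \<int>"
  shows "complex_of_real (cot (pi * s)) * fourier_e (- n) s
    = complex_of_real (cot (pi * s)) + cot_fourier_remainder n s"
proof (cases "0 \<le> n")
  case True
  define m where "m = nat n"
  have n: "n = int m" using True m_def by simp
  have "complex_of_real (cot (pi * s)) * (fourier_e (- n) s - 1)
      = - (complex_of_real (cot (pi * s)) * (fourier_e 1 s - 1))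
          * (\<Sum>k<m. fourier_e (- int k - 1) s)"
    unfolding n fourier_e_neg_nat_telescope by (simp add: algebra_simps)
  also have "\<dots> = - \<i> * (\<Sum>k<m. (fourier_e 1 s + 1) * fourier_e (- int k - 1) s)"
    unfolding cot_mult_fourier_e_1[OF assms] by (simp add: sum_distrib_left algebra_simps)
  also have "\<dots> = cot_fourier_remainder n s"
    using True fourier_e_freq_add[of 1 "- int _ - 1" s]
    by (simp add: cot_fourier_remainder_def m_def[symmetric] algebra_simps)
  finally show ?thesis by (simp add: algebra_simps)
next
  case False
  define m where "m = nat (- n)"
  have n: "- n = int m" using False m_def by simp
  have "complex_of_real (cot (pi * s)) * (fourier_e (- n) s - 1)
      = (complex_of_real (cot (pi * s)) * (fourier_e 1 s - 1)) * (\<Sum>k<m. fourier_e (int k) s)"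
    unfolding n fourier_e_nat_telescope by (simp add: algebra_simps)
  also have "\<dots> = \<i> * (\<Sum>k<m. (fourier_e 1 s + 1) * fourier_e (int k) s)"
    unfolding cot_mult_fourier_e_1[OF assms] by (simp add: sum_distrib_left algebra_simps)
  also have "\<dots> = cot_fourier_remainder n s"
    using False fourier_e_freq_add[of 1 "int _" s]
    by (simp add: cot_fourier_remainder_def m_def[symmetric] algebra_simps)
  finally show ?thesis by (simp add: algebra_simps)
qed

lemma continuous_on_cot_fourier_remainder [continuous_intros]:
  "continuous_on S g \<Longrightarrow> continuous_on S (\<lambda>x. cot_fourier_remainder n (g x))"
  unfolding cot_fourier_remainder_def by (cases "0 \<le> n") (auto intro!: continuous_intros)

definition rectangle_rule_exact :: "nat \<Rightarrow> (real \<Rightarrow> complex) \<Rightarrow> bool" where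
  "rectangle_rule_exact N g \<longleftrightarrow>
     (g has_integral (\<Sum>j=1..N. g (real j / real N)) / of_nat N) {0..1}"

lemma rectangle_rule_exact_add:
  "rectangle_rule_exact N g \<Longrightarrow> rectangle_rule_exact N h \<Longrightarrow>
    rectangle_rule_exact N (\<lambda>x. g x + h x)"
  unfolding rectangle_rule_exact_def
  by (simp add: sum.distrib add_divide_distrib has_integral_add)

lemma rectangle_rule_exact_cmult:
  "rectangle_rule_exact N g \<Longrightarrow> rectangle_rule_exact N (\<lambda>x. c * g x)"
  unfolding rectangle_rule_exact_def
  by (simp add: has_integral_mult_right flip: sum_distrib_left times_divide_eq_right)

lemma rectangle_rule_exact_sum:
  assumes "finite A" "\<And>a. a \<in> A \<Longrightarrow> rectangle_rule_exact N (g a)"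
  shows "rectangle_rule_exact N (\<lambda>x. \<Sum>a\<in>A. g a x)"
proof -
  have "((\<lambda>x. \<Sum>a\<in>A. g a x) has_integral (\<Sum>a\<in>A. (\<Sum>j=1..N. g a (real j / real N)) / of_nat N))
      {0..1}"
    using assms by (intro has_integral_sum) (auto simp: rectangle_rule_exact_def)
  moreover have "(\<Sum>a\<in>A. (\<Sum>j=1..N. g a (real j / real N)) / of_nat N)
      = (\<Sum>j=1..N. \<Sum>a\<in>A. g a (real j / real N)) / of_nat N"
    unfolding sum_divide_distrib[symmetric] by (simp only: sum.swap[of _ A])
  ultimately show ?thesis unfolding rectangle_rule_exact_def by simp
qed

lemma rectangle_rule_exact_fourier_e_diff:
  assumes "N > 0" "\<bar>k\<bar> < int N"
  shows "rectangle_rule_exact N (\<lambda>\<tau>. fourier_e k (t - \<tau>))"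
  unfolding rectangle_rule_exact_def sum_fourier_e_nodes[OF assms]
  using has_integral_fourier_e_diff[of k t] assms(1) by (cases "k = 0") auto

lemma rectangle_rule_exact_cot_fourier_remainder:
  assumes N: "N > 0" and n: "\<bar>n\<bar> < int N"
  shows "rectangle_rule_exact N (\<lambda>\<tau>. cot_fourier_remainder n (t - \<tau>))"
proof -
  have exact: "rectangle_rule_exact N (\<lambda>\<tau>. fourier_e k (t - \<tau>))" if "\<bar>k\<bar> \<le> \<bar>n\<bar>" for k
    using that n by (intro rectangle_rule_exact_fourier_e_diff N) simp
  show ?thesis
  proof (cases "0 \<le> n")
    case True
    show ?thesis
      unfolding cot_fourier_remainder_def if_P[OF True]
      by (intro rectangle_rule_exact_cmult rectangle_rule_exact_sum finite_lessThan
          rectangle_rule_exact_add exact) (use True in auto)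
  next
    case False
    show ?thesis
      unfolding cot_fourier_remainder_def if_not_P[OF False]
      by (intro rectangle_rule_exact_cmult rectangle_rule_exact_sum finite_lessThan
          rectangle_rule_exact_add exact) (use False in auto)
  qed
qed

lemma cot_pi_eq_geometric_sum:
  assumes s: "s \<notin> \<int>" and U: "fourier_e (int N) s \<noteq> 1"
  shows "complex_of_real (cot (pi * s))
    = \<i> + 2 * \<i> * (\<Sum>k<N. fourier_e (int k) s) / (fourier_e (int N) s - 1)"
proof -
  define z where "z = fourier_e 1 s"
  have "z \<noteq> 1" unfolding z_def using s by (rule fourier_e_1_neq_1)
  have "complex_of_real (cot (pi * s)) = \<i> + 2 * \<i> / (z - 1)"
    using cot_mult_fourier_e_1[OF s] \<open>z \<noteq> 1\<close> unfolding z_def[symmetric]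
    by (simp add: field_simps)
  moreover have "(\<Sum>k<N. fourier_e (int k) s) = (fourier_e (int N) s - 1) / (z - 1)"
    using \<open>z \<noteq> 1\<close> unfolding z_def fourier_e_1_power[symmetric] by (simp add: geometric_sum)
  ultimately show ?thesis using U by simp
qed

lemma diff_node_notin_Ints:
  assumes "N > 0" "real N * t \<notin> \<int>"
  shows "t - real j / real N \<notin> \<int>"
proof
  assume "t - real j / real N \<in> \<int>"
  then obtain i where "t - real j / real N = of_int i" by (elim Ints_cases)
  then have "real N * t = of_int (i * int N + int j)" using assms(1) by (simp add: field_simps)
  then show False using assms(2) by (metis Ints_of_int)
qed

lemma sum_cot_nodes:
  assumes N: "N > 0" and t: "real N * t \<notin> \<int>"
  shows "(\<Sum>j=1..N. complex_of_real (cot (pi * (t - real j / real N))))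
    = of_nat N * complex_of_real (cot (pi * (real N * t)))"
proof -
  define U where "U = fourier_e 1 (real N * t)"
  have "U \<noteq> 1" unfolding U_def using t by (rule fourier_e_1_neq_1)
  have U_nodes: "fourier_e (int N) (t - real j / real N) = U" for j
  proof -
    have "fourier_e (int N) (t - real j / real N) = fourier_e 1 (real N * (t - real j / real N))"
      using fourier_e_freq_mult[of "int N" 1] by simp
    also have "real N * (t - real j / real N) = real N * t + of_int (- int j)"
      using N by (simp add: field_simps)
    finally show ?thesis unfolding U_def fourier_e_arg_add_of_int .
  qed
  have "(\<Sum>j=1..N. \<Sum>k<N. fourier_e (int k) (t - real j / real N))
      = (\<Sum>k<N. \<Sum>j=1..N. fourier_e (int k) (t - real j / real N))"
    by (rule sum.swap)
  also have "\<dots> = (\<Sum>k<N. if k = 0 then of_nat N else 0)"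
  proof (rule sum.cong[OF refl])
    fix k assume "k \<in> {..<N}"
    then show "(\<Sum>j=1..N. fourier_e (int k) (t - real j / real N)) = (if k = 0 then of_nat N else 0)"
      using sum_fourier_e_nodes[OF N, of "int k" t] by simp
  qed
  also have "\<dots> = of_nat N" using N by simp
  finally have double_sum: "(\<Sum>j=1..N. \<Sum>k<N. fourier_e (int k) (t - real j / real N)) = of_nat N" .
  have "(\<Sum>j=1..N. complex_of_real (cot (pi * (t - real j / real N))))
      = (\<Sum>j=1..N. \<i> + 2 * \<i> * (\<Sum>k<N. fourier_e (int k) (t - real j / real N)) / (U - 1))"
  proof (rule sum.cong[OF refl])
    fix j
    have "fourier_e (int N) (t - real j / real N) \<noteq> 1" using U_nodes \<open>U \<noteq> 1\<close> by simp
    from cot_pi_eq_geometric_sum[OF diff_node_notin_Ints[OF N t] this]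
    show "complex_of_real (cot (pi * (t - real j / real N)))
      = \<i> + 2 * \<i> * (\<Sum>k<N. fourier_e (int k) (t - real j / real N)) / (U - 1)"
      unfolding U_nodes .
  qed
  also have "\<dots> = of_nat N * \<i> + 2 * \<i> * of_nat N / (U - 1)"
    unfolding sum.distrib sum_divide_distrib[symmetric] sum_distrib_left[symmetric] double_sum
    by simp
  also have "\<dots> = of_nat N * (\<i> * (U + 1) / (U - 1))"
    using \<open>U \<noteq> 1\<close> by (simp add: field_simps)
  also have "\<i> * (U + 1) / (U - 1) = complex_of_real (cot (pi * (real N * t)))"
    using cot_mult_fourier_e_1[OF t] \<open>U \<noteq> 1\<close> unfolding U_def by (simp add: field_simps)
  finally show ?thesis .
qed

lemma hilbert_trunc_domain:
  fixes t \<epsilon> :: real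
  assumes e: "0 < \<epsilon>" "\<epsilon> < frac t" "\<epsilon> < 1 - frac t"
  shows "{\<tau> \<in> {0..1}. \<forall>k::int. \<epsilon> \<le> \<bar>t - \<tau> - real_of_int k\<bar>}
    = {0..frac t - \<epsilon>} \<union> {frac t + \<epsilon>..1}"
proof (intro set_eqI iffI)
  fix \<tau> assume "\<tau> \<in> {\<tau> \<in> {0..1}. \<forall>k::int. \<epsilon> \<le> \<bar>t - \<tau> - real_of_int k\<bar>}"
  then have "\<tau> \<in> {0..1}" "\<epsilon> \<le> \<bar>t - \<tau> - of_int \<lfloor>t\<rfloor>\<bar>" by auto
  then show "\<tau> \<in> {0..frac t - \<epsilon>} \<union> {frac t + \<epsilon>..1}" by (auto simp: frac_def)
next
  fix \<tau> assume \<tau>: "\<tau> \<in> {0..frac t - \<epsilon>} \<union> {frac t + \<epsilon>..1}"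
  have "\<epsilon> \<le> \<bar>t - \<tau> - real_of_int k\<bar>" for k
  proof -
    consider "k = \<lfloor>t\<rfloor>" | "k \<ge> \<lfloor>t\<rfloor> + 1" | "k \<le> \<lfloor>t\<rfloor> - 1" by linarith
    then show ?thesis
    proof cases
      case 2
      then have "real_of_int k \<ge> of_int \<lfloor>t\<rfloor> + 1" by linarith
      then show ?thesis using \<tau> e by (auto simp: frac_def)
    next
      case 3
      then have "real_of_int k \<le> of_int \<lfloor>t\<rfloor> - 1" by linarith
      then show ?thesis using \<tau> e by (auto simp: frac_def)
    qed (use \<tau> in \<open>auto simp: frac_def\<close>)
  qed
  then show "\<tau> \<in> {\<tau> \<in> {0..1}. \<forall>k::int. \<epsilon> \<le> \<bar>t - \<tau> - real_of_int k\<bar>}"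
    using \<tau> e by auto
qed

lemma punctured_domain_diff_notin_Ints:
  fixes t \<epsilon> :: real
  assumes "0 < \<epsilon>" "\<epsilon> < frac t" "\<epsilon> < 1 - frac t"
    and "\<tau> \<in> {0..frac t - \<epsilon>} \<union> {frac t + \<epsilon>..1}"
  shows "t - \<tau> \<notin> \<int>"
proof
  assume "t - \<tau> \<in> \<int>"
  then obtain k where "t - \<tau> = of_int k" by (elim Ints_cases)
  moreover have "\<epsilon> \<le> \<bar>t - \<tau> - real_of_int k\<bar>"
    using assms(4) unfolding hilbert_trunc_domain[OF assms(1-3), symmetric] by blast
  ultimately show False using assms(1) by simp
qed

lemma sin_squared_pi_int_add: "(sin (pi * (of_int m + x)))\<^sup>2 = (sin (pi * x))\<^sup>2"
proof -
  have "sin (pi * of_int m) = 0" by (simp add: sin_times_pi_eq_0 mult.commute)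
  then have "(cos (pi * of_int m))\<^sup>2 = 1" using sin_cos_squared_add[of "pi * of_int m"] by simp
  moreover have "sin (pi * (of_int m + x)) = cos (pi * of_int m) * sin (pi * x)"
    using \<open>sin (pi * of_int m) = 0\<close> by (simp add: distrib_left sin_add)
  ultimately show ?thesis by (simp add: power_mult_distrib)
qed

lemma has_integral_cot_pi_diff:
  assumes "a \<le> b" and no_pole: "\<And>\<tau>. \<tau> \<in> {a..b} \<Longrightarrow> t - \<tau> \<notin> \<int>"
  shows "((\<lambda>\<tau>. complex_of_real (cot (pi * (t - \<tau>)))) has_integral
    of_real ((ln ((sin (pi * (t - a)))\<^sup>2) - ln ((sin (pi * (t - b)))\<^sup>2)) / (2 * pi))) {a..b}"
proof -
  define F where "F = (\<lambda>\<tau>. - ln ((sin (pi * (t - \<tau>)))\<^sup>2) / (2 * pi))"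
  have F': "(F has_real_derivative cot (pi * (t - \<tau>))) (at \<tau>)" if "\<tau> \<in> {a..b}" for \<tau>
  proof -
    have "sin (pi * (t - \<tau>)) \<noteq> 0" using no_pole[OF that] by (simp add: sin_pi_nonzero_iff)
    then show ?thesis
      unfolding F_def
      by (auto intro!: derivative_eq_intros
          simp: cot_def divide_simps power2_eq_square not_square_less_zero less_le)
  qed
  have "((\<lambda>\<tau>. complex_of_real (F \<tau>)) has_vector_derivative complex_of_real (cot (pi * (t - \<tau>))))
      (at \<tau> within {a..b})" if "\<tau> \<in> {a..b}" for \<tau>
    using has_vector_derivative_of_real[OF F'[OF that]] by (rule has_vector_derivative_at_within)
  from fundamental_theorem_of_calculus[OF assms(1) this]
  have "((\<lambda>\<tau>. complex_of_real (cot (pi * (t - \<tau>)))) has_integral of_real (F b - F a)) {a..b}"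
    by simp
  moreover have "F b - F a = (ln ((sin (pi * (t - a)))\<^sup>2) - ln ((sin (pi * (t - b)))\<^sup>2)) / (2 * pi)"
    unfolding F_def by (simp add: diff_divide_distrib)
  ultimately show ?thesis by simp
qed

text \<open>The principal value of cot(\<pi>(t - \<tau>)) over a period vanishes: its log-sine primitive takes
  equal values at 0 and 1 by periodicity, and at frac t \<mp> \<epsilon> by symmetry about the pole.\<close>
lemma has_integral_cot_pi_diff_punctured:
  fixes t \<epsilon> :: real
  assumes e: "0 < \<epsilon>" "\<epsilon> < frac t" "\<epsilon> < 1 - frac t"
  shows "((\<lambda>\<tau>. complex_of_real (cot (pi * (t - \<tau>)))) has_integral 0)
    ({0..frac t - \<epsilon>} \<union> {frac t + \<epsilon>..1})"
proof -
  define L where "L x = ln ((sin (pi * x))\<^sup>2)" for x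
  have no_pole: "t - \<tau> \<notin> \<int>" if "\<tau> \<in> {0..frac t - \<epsilon>} \<union> {frac t + \<epsilon>..1}" for \<tau>
    using punctured_domain_diff_notin_Ints[OF e that] .
  have left: "((\<lambda>\<tau>. complex_of_real (cot (pi * (t - \<tau>)))) has_integral
      of_real ((L (t - 0) - L (t - (frac t - \<epsilon>))) / (2 * pi))) {0..frac t - \<epsilon>}"
    unfolding L_def by (rule has_integral_cot_pi_diff) (use e no_pole in auto)
  have right: "((\<lambda>\<tau>. complex_of_real (cot (pi * (t - \<tau>)))) has_integral
      of_real ((L (t - (frac t + \<epsilon>)) - L (t - 1)) / (2 * pi))) {frac t + \<epsilon>..1}"
    unfolding L_def by (rule has_integral_cot_pi_diff) (use e no_pole in auto)
  have "L (t - 1) = L t"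
    using sin_squared_pi_int_add[of "- 1" t] unfolding L_def by simp
  moreover have "L (t - (frac t - \<epsilon>)) = L (t - (frac t + \<epsilon>))"
    using sin_squared_pi_int_add[of "\<lfloor>t\<rfloor>" \<epsilon>] sin_squared_pi_int_add[of "\<lfloor>t\<rfloor>" "- \<epsilon>"]
    unfolding L_def frac_def by (simp add: algebra_simps)
  moreover have "negligible ({0..frac t - \<epsilon>} \<inter> {frac t + \<epsilon>..1})"
    using e by (simp add: Int_atLeastAtMost)
  ultimately show ?thesis
    using has_integral_Un[OF left right] by (simp flip: of_real_add add_divide_distrib)
qed

lemma integral_centered_interval_tendsto_0:
  fixes q :: "real \<Rightarrow> complex"
  assumes "continuous_on UNIV q"
  shows "((\<lambda>\<epsilon>. integral {c - \<epsilon>..c + \<epsilon>} q) \<longlongrightarrow> 0) (at_right 0)"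
proof -
  have "compact (q ` {c - 1..c + 1})"
    by (rule compact_continuous_image) (use assms continuous_on_subset in auto)
  then obtain B where B: "B > 0" "\<And>x. x \<in> q ` {c - 1..c + 1} \<Longrightarrow> norm x \<le> B"
    using compact_imp_bounded bounded_pos by metis
  have "eventually (\<lambda>\<epsilon>. norm (integral {c - \<epsilon>..c + \<epsilon>} q) \<le> B * (2 * \<epsilon>)) (at_right 0)"
    unfolding eventually_at_right_field
  proof (intro exI[of _ 1] conjI allI impI)
    fix \<epsilon> :: real assume e: "0 < \<epsilon>" "\<epsilon> < 1"
    have "q integrable_on {c - \<epsilon>..c + \<epsilon>}"
      by (rule integrable_continuous_interval) (use assms continuous_on_subset in auto)
    from has_integral_bound_real[OF _ _ integrable_integral[OF this], of B]
    show "norm (integral {c - \<epsilon>..c + \<epsilon>} q) \<le> B * (2 * \<epsilon>)"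
      using B e by (auto simp: content_real)
  qed simp
  moreover have "((\<lambda>\<epsilon>::real. B * (2 * \<epsilon>)) \<longlongrightarrow> 0) (at_right 0)"
    by (auto intro!: tendsto_eq_intros)
  ultimately show ?thesis by (rule Lim_null_comparison)
qed

lemma hilbert_trunc_eq_punctured_integral:
  fixes t \<epsilon> :: real
  assumes e: "0 < \<epsilon>" "\<epsilon> < frac t" "\<epsilon> < 1 - frac t"
    and r: "continuous_on UNIV r"
    and decomp: "\<And>\<tau>. t - \<tau> \<notin> \<int> \<Longrightarrow>
      complex_of_real (cot (pi * (t - \<tau>))) * \<phi> \<tau> = \<phi> t * complex_of_real (cot (pi * (t - \<tau>))) + r \<tau>"
  shows "hilbert_trunc \<phi> t \<epsilon> = integral {0..1} r - integral {frac t - \<epsilon>..frac t + \<epsilon>} r"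
proof -
  let ?a = "frac t - \<epsilon>" and ?b = "frac t + \<epsilon>"
  have r_int: "r integrable_on {x..y}" for x y
    by (rule integrable_continuous_interval) (use r continuous_on_subset in blast)
  have "negligible ({0..?a} \<inter> {?b..1})" using e by (simp add: Int_atLeastAtMost)
  then have "(r has_integral (integral {0..?a} r + integral {?b..1} r)) ({0..?a} \<union> {?b..1})"
    using r_int by (intro has_integral_Un integrable_integral)
  from has_integral_add[OF has_integral_mult_right[OF has_integral_cot_pi_diff_punctured[OF e]] this]
  have "((\<lambda>\<tau>. \<phi> t * complex_of_real (cot (pi * (t - \<tau>))) + r \<tau>) has_integral
      (integral {0..?a} r + integral {?b..1} r)) ({0..?a} \<union> {?b..1})"
    by simp
  then have "((\<lambda>\<tau>. complex_of_real (cot (pi * (t - \<tau>))) * \<phi> \<tau>) has_integral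
      (integral {0..?a} r + integral {?b..1} r)) ({0..?a} \<union> {?b..1})"
    by (rule has_integral_eq[rotated])
      (use decomp punctured_domain_diff_notin_Ints[OF e] in \<open>auto\<close>)
  moreover have "integral {0..?a} r + integral {?a..?b} r + integral {?b..1} r = integral {0..1} r"
  proof -
    have "integral {?a..?b} r + integral {?b..1} r = integral {?a..1} r"
      by (rule Henstock_Kurzweil_Integration.integral_combine) (use e r_int in auto)
    moreover have "integral {0..?a} r + integral {?a..1} r = integral {0..1} r"
      by (rule Henstock_Kurzweil_Integration.integral_combine) (use e r_int in auto)
    ultimately show ?thesis by (simp add: add.assoc)
  qed
  ultimately show ?thesis
    unfolding hilbert_trunc_def hilbert_trunc_domain[OF e]
    by (auto dest: integral_unique simp: algebra_simps)
qed

lemma hilbert_trunc_tendsto: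
  fixes t :: real
  assumes t: "t \<notin> \<int>" and r: "continuous_on UNIV r"
    and decomp: "\<And>\<tau>. t - \<tau> \<notin> \<int> \<Longrightarrow>
      complex_of_real (cot (pi * (t - \<tau>))) * \<phi> \<tau> = \<phi> t * complex_of_real (cot (pi * (t - \<tau>))) + r \<tau>"
  shows "(hilbert_trunc \<phi> t \<longlongrightarrow> integral {0..1} r) (at_right 0)"
proof -
  have "eventually (\<lambda>\<epsilon>. integral {0..1} r - integral {frac t - \<epsilon>..frac t + \<epsilon>} r = hilbert_trunc \<phi> t \<epsilon>)
      (at_right 0)"
    unfolding eventually_at_right_field
    using t frac_lt_1[of t] hilbert_trunc_eq_punctured_integral[OF _ _ _ r decomp]
    by (intro exI[of _ "min (frac t) (1 - frac t)"]) auto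
  moreover have "((\<lambda>\<epsilon>. integral {0..1} r - integral {frac t - \<epsilon>..frac t + \<epsilon>} r)
      \<longlongrightarrow> integral {0..1} r - 0) (at_right 0)"
    by (intro tendsto_diff tendsto_const integral_centered_interval_tendsto_0 r)
  ultimately show ?thesis by (simp add: tendsto_cong)
qed

lemma trig_index_abs_less:
  assumes "n \<in> trig_index N"
  shows "\<bar>n\<bar> < int N"
proof -
  have "\<bar>real_of_int n\<bar> < real N" using assms unfolding trig_index_def by auto
  then show ?thesis by linarith
qed

lemma finite_trig_index: "finite (trig_index N)"
proof (rule finite_subset)
  show "trig_index N \<subseteq> {- int N..int N}"
    unfolding trig_index_def by auto
qed simp

lemma trig_space_cot_decomposition:
  assumes N: "N > 0" and \<phi>: "\<phi> \<in> trig_space N"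
  obtains r where "continuous_on UNIV r" and "rectangle_rule_exact N r"
    and "\<And>\<tau>. t - \<tau> \<notin> \<int> \<Longrightarrow>
      complex_of_real (cot (pi * (t - \<tau>))) * \<phi> \<tau> = \<phi> t * complex_of_real (cot (pi * (t - \<tau>))) + r \<tau>"
proof -
  obtain c where \<phi>_eq: "\<phi> = (\<lambda>s. \<Sum>n\<in>trig_index N. c n * fourier_e n s)"
    using \<phi> unfolding trig_space_def by blast
  define r where "r \<tau> = (\<Sum>n\<in>trig_index N. c n * fourier_e n t * cot_fourier_remainder n (t - \<tau>))"
    for \<tau>
  have "continuous_on UNIV r"
    unfolding r_def by (intro continuous_intros)
  moreover have "rectangle_rule_exact N r"
    unfolding r_def using finite_trig_index trig_index_abs_less
    by (intro rectangle_rule_exact_sum rectangle_rule_exact_cmult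
        rectangle_rule_exact_cot_fourier_remainder N) auto
  moreover have "complex_of_real (cot (pi * (t - \<tau>))) * \<phi> \<tau>
      = \<phi> t * complex_of_real (cot (pi * (t - \<tau>))) + r \<tau>" if "t - \<tau> \<notin> \<int>" for \<tau>
  proof -
    have "complex_of_real (cot (pi * (t - \<tau>))) * fourier_e n \<tau>
        = fourier_e n t * (complex_of_real (cot (pi * (t - \<tau>))) + cot_fourier_remainder n (t - \<tau>))"
      for n
      using fourier_e_diff[of n \<tau> t] cot_mult_fourier_e[OF that, of n]
      by (simp add: algebra_simps)
    then show ?thesis
      unfolding \<phi>_eq r_def
      by (simp add: sum_distrib_left sum_distrib_right sum.distrib[symmetric] algebra_simps)
  qed
  ultimately show ?thesis using that by blast
qed

theorem proposition5p1:
  fixes N :: nat and \<phi> :: "real \<Rightarrow> complex" and t :: real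
  assumes "N > 0"
    and "\<phi> \<in> trig_space N"
    and "t / (1 / real N) \<notin> \<int>"
  shows "(hilbert_trunc \<phi> t \<longlongrightarrow> periodic_hilbert \<phi> t) (at_right 0)
    \<and> complex_of_real (1 / real N) *
        (\<Sum>j=1..N. complex_of_real (cot (pi * (t - real j * (1 / real N)))) * \<phi> (real j * (1 / real N)))
      = periodic_hilbert \<phi> t + complex_of_real (cot (pi * t / (1 / real N))) * \<phi> t"
proof -
  have Nt: "real N * t \<notin> \<int>" using assms(3) by (simp add: mult.commute)
  then have t: "t \<notin> \<int>" by (metis Ints_mult Ints_of_nat)
  obtain r where r_cont: "continuous_on UNIV r" and r_exact: "rectangle_rule_exact N r"
    and decomp: "\<And>\<tau>. t - \<tau> \<notin> \<int> \<Longrightarrow>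
      complex_of_real (cot (pi * (t - \<tau>))) * \<phi> \<tau> = \<phi> t * complex_of_real (cot (pi * (t - \<tau>))) + r \<tau>"
    using trig_space_cot_decomposition[OF assms(1,2)] by blast
  have lim: "(hilbert_trunc \<phi> t \<longlongrightarrow> integral {0..1} r) (at_right 0)"
    using t r_cont decomp by (rule hilbert_trunc_tendsto)
  then have hilbert: "periodic_hilbert \<phi> t = integral {0..1} r"
    unfolding periodic_hilbert_def by (intro tendsto_Lim) simp_all
  have "(\<Sum>j=1..N. complex_of_real (cot (pi * (t - real j / real N))) * \<phi> (real j / real N))
      = \<phi> t * (\<Sum>j=1..N. complex_of_real (cot (pi * (t - real j / real N))))
        + (\<Sum>j=1..N. r (real j / real N))"
    using decomp[OF diff_node_notin_Ints[OF assms(1) Nt]]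
    by (simp add: sum.distrib sum_distrib_left)
  also have "\<dots> = of_nat N * (\<phi> t * complex_of_real (cot (pi * (real N * t))) + integral {0..1} r)"
  proof -
    have "integral {0..1} r = (\<Sum>j=1..N. r (real j / real N)) / of_nat N"
      using r_exact unfolding rectangle_rule_exact_def by (rule integral_unique)
    then show ?thesis
      unfolding sum_cot_nodes[OF assms(1) Nt] using assms(1) by (simp add: algebra_simps)
  qed
  finally show ?thesis
    using lim assms(1) unfolding hilbert by (simp add: field_simps)
qed

end
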